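(* Let $\mathcal{G}$ be a class of graphs of unbounded average degree, and let $\mathcal{A}$ be the class of all (unweighted) orientations of graphs in $\mathcal{G}$. Then $\mathcal{A}$ is not size-pliable.
   Context: An orientation of a graph is viewed as a structure over the signature $\{e\}$ with one binary symbol, where $e^{\mathbb{A}}(u,v)=1$ if $u\to v$ is an arc and $0$ otherwise. For structures $\mathbb{A},\mathbb{B}$ over a signature $\sigma$ (finite domain with functions $f^{\mathbb{A}}\colon A^{\mathrm{ar}(f)}\to\mathbb{Q}_{\ge0}$), $\mathrm{opt}(\mathbb{A},\mathbb{B})=\max_{h\colon A\to B}\sum_f\sum_{\bar x}f^{\mathbb{A}}(\bar x)f^{\mathbb{B}}(h(\bar x))$ over all maps, and $d_{\mathrm{opt}}(\mathbb{A},\mathbb{B})=\sup_{\mathbb{C}}|\ln\mathrm{opt}(\mathbb{A},\mathbb{C})-\ln\mathrm{opt}(\mathbb{B},\mathbb{C})|$ over all $\sigma$-structures $\mathbb{C}$ ($\ln0=-\infty$, $|\ln0-\ln0|=0$). A class $\mathcal{A}$ is size-pliable if for every $\varepsilon>0$ there is $k$ such that every $\mathbb{A}\in\mathcal{A}$ (signature $\sigma$) has a $\sigma$-structure $\mathbb{B}$ with domain of size at most $k$ and $d_{\mathrm{opt}}(\mathbb{A},\mathbb{B})\le\varepsilon$. *)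

theory Defs
  imports Complex_Main "HOL-Library.FuncSet" "HOL-Library.Extended_Real"
begin

text \<open>A structure over the signature with one binary function symbol e:
  a finite nonempty domain (of natural numbers) and e :: domain^2 -> Q_{>=0}.\<close>
type_synonym struct = "nat set \<times> (nat \<Rightarrow> nat \<Rightarrow> rat)"

definition dom_s :: "struct \<Rightarrow> nat set" where "dom_s S = fst S"
definition e_s :: "struct \<Rightarrow> nat \<Rightarrow> nat \<Rightarrow> rat" where "e_s S = snd S"

definition is_struct :: "struct \<Rightarrow> bool" where
  "is_struct S \<longleftrightarrow> finite (dom_s S) \<and> dom_s S \<noteq> {} \<and>
     (\<forall>x\<in>dom_s S. \<forall>y\<in>dom_s S. e_s S x y \<ge> 0)"

definition opt :: "struct \<Rightarrow> struct \<Rightarrow> real" where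
  "opt A B = Max ((\<lambda>h. real_of_rat (\<Sum>(x,y)\<in>dom_s A \<times> dom_s A.
                        e_s A x y * e_s B (h x) (h y)))
                  ` (dom_s A \<rightarrow>\<^sub>E dom_s B))"

text \<open>|ln a - ln b| with ln 0 = -infinity and |ln 0 - ln 0| = 0.\<close>
definition lndist :: "real \<Rightarrow> real \<Rightarrow> ereal" where
  "lndist a b = (if a = 0 \<and> b = 0 then 0
                 else if a = 0 \<or> b = 0 then \<infinity>
                 else ereal \<bar>ln a - ln b\<bar>)"

definition d_opt :: "struct \<Rightarrow> struct \<Rightarrow> ereal" where
  "d_opt A B = (SUP C \<in> {C. is_struct C}. lndist (opt A C) (opt B C))"

definition size_pliable :: "struct set \<Rightarrow> bool" where
  "size_pliable \<A> \<longleftrightarrow> (\<forall>\<epsilon>::real. \<epsilon> > 0 \<longrightarrow> (\<exists>k::nat. \<forall>A\<in>\<A>. \<exists>B.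
      is_struct B \<and> card (dom_s B) \<le> k \<and> d_opt A B \<le> ereal \<epsilon>))"

type_synonym graph = "nat set \<times> nat set set"

definition is_graph :: "graph \<Rightarrow> bool" where
  "is_graph G \<longleftrightarrow> finite (fst G) \<and> (\<forall>e\<in>snd G. e \<subseteq> fst G \<and> card e = 2)"

definition avg_degree :: "graph \<Rightarrow> real" where
  "avg_degree G = 2 * real (card (snd G)) / real (card (fst G))"

definition unbounded_avg_degree :: "graph set \<Rightarrow> bool" where
  "unbounded_avg_degree \<G> \<longleftrightarrow> (\<forall>d::real. \<exists>G\<in>\<G>. avg_degree G > d)"

definition is_orientation :: "struct \<Rightarrow> graph \<Rightarrow> bool" where
  "is_orientation A G \<longleftrightarrow> dom_s A = fst G \<and>
     (\<forall>u\<in>fst G. \<forall>v\<in>fst G. e_s A u v \<in> {0, 1}) \<and>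
     (\<forall>u\<in>fst G. \<forall>v\<in>fst G. {u, v} \<notin> snd G \<longrightarrow> e_s A u v = 0) \<and>
     (\<forall>u\<in>fst G. \<forall>v\<in>fst G. {u, v} \<in> snd G \<longrightarrow> e_s A u v + e_s A v u = 1)"

definition orientations :: "graph set \<Rightarrow> struct set" where
  "orientations \<G> = {A. \<exists>G\<in>\<G>. is_orientation A G}"

end

theory Submission
  imports Defs "HOL-Library.Nat_Bijection"
begin

(* Suppose every orientation A were (1/10)-close to a structure B on at most k elements.
   An optimal map B -> A has an image of at most k vertices, and the oriented graph spanned
   by it embeds into a fixed universal tournament U on univ_size k vertices, so
   opt(B,U) >= opt(B,A).  Using d_opt(A,B) <= 1/10 for the targets A and U then gives
   opt(A,U) >= e^(-1/5) opt(A,A) >= (4/5) m, where m is the number of edges.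
   On the other hand, for a fixed map V -> U a uniformly random orientation sends at least
   3m/4 edges onto arcs with probability at most (3/2)^m / 2^(3m/4); once the average
   degree exceeds 16 |U| this beats the |U|^|V| choices of the map, so some orientation has
   opt(A,U) < (3/4) m. *)

definition hom_value :: "struct \<Rightarrow> struct \<Rightarrow> (nat \<Rightarrow> nat) \<Rightarrow> real" where
  "hom_value A C h = real_of_rat (\<Sum>(x,y)\<in>dom_s A \<times> dom_s A. e_s A x y * e_s C (h x) (h y))"

lemma hom_value_le_opt:
  assumes "finite (dom_s A)" "finite (dom_s C)" "h \<in> dom_s A \<rightarrow>\<^sub>E dom_s C"
  shows "hom_value A C h \<le> opt A C"
  unfolding opt_def hom_value_def using assms by (intro Max_ge) (auto simp: finite_PiE)

lemma opt_attained:
  assumes "finite (dom_s A)" "finite (dom_s C)" "dom_s C \<noteq> {}"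
  obtains h where "h \<in> dom_s A \<rightarrow>\<^sub>E dom_s C" "opt A C = hom_value A C h"
proof -
  have "dom_s A \<rightarrow>\<^sub>E dom_s C \<noteq> {}" using assms by (simp add: PiE_eq_empty_iff)
  then have "opt A C \<in> hom_value A C ` (dom_s A \<rightarrow>\<^sub>E dom_s C)"
    unfolding opt_def hom_value_def using assms by (intro Max_in) (auto simp: finite_PiE)
  then show ?thesis using that by blast
qed

lemma opt_nonneg:
  assumes "is_struct A" "is_struct C"
  shows "0 \<le> opt A C"
proof -
  obtain h where "h \<in> dom_s A \<rightarrow>\<^sub>E dom_s C" "opt A C = hom_value A C h"
    using assms opt_attained unfolding is_struct_def by metis
  then show ?thesis
    using assms unfolding is_struct_def hom_value_def by (auto intro!: sum_nonneg simp: PiE_iff)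
qed

lemma hom_value_mono:
  assumes "\<forall>x\<in>dom_s A. \<forall>y\<in>dom_s A. 0 \<le> e_s A x y \<and> e_s C (h x) (h y) \<le> e_s C' (h' x) (h' y)"
  shows "hom_value A C h \<le> hom_value A C' h'"
  unfolding hom_value_def of_rat_less_eq using assms
  by (intro sum_mono) (auto intro: mult_left_mono)

lemma lndist_commute: "lndist a b = lndist b a"
  unfolding lndist_def by (auto simp: abs_minus_commute)

lemma d_opt_commute: "d_opt A B = d_opt B A"
  unfolding d_opt_def by (simp add: lndist_commute)

lemma exp_d_opt_mult_le_opt:
  assumes d: "d_opt A B \<le> ereal \<epsilon>" and "is_struct B" "is_struct C" and pos: "0 < opt A C"
  shows "exp (- \<epsilon>) * opt A C \<le> opt B C"
proof -
  have "lndist (opt A C) (opt B C) \<le> d_opt A B"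
    unfolding d_opt_def using \<open>is_struct C\<close> by (intro SUP_upper) auto
  with d have close: "lndist (opt A C) (opt B C) \<le> ereal \<epsilon>" by simp
  have "opt B C \<noteq> 0" using close pos unfolding lndist_def by auto
  with opt_nonneg[OF assms(2,3)] have posB: "0 < opt B C" by simp
  with close pos have "ln (opt A C) - \<epsilon> \<le> ln (opt B C)" unfolding lndist_def by auto
  then have "exp (ln (opt A C) - \<epsilon>) \<le> exp (ln (opt B C))" by (simp only: exp_le_cancel_iff)
  with pos posB show ?thesis by (simp add: exp_diff exp_minus field_simps)
qed

lemma exp_d_opt_self_le_opt:
  assumes d: "d_opt A B \<le> ereal \<epsilon>" and structs: "is_struct A" "is_struct B" "is_struct U"
    and pos: "0 < opt A A" and through_U: "opt B A \<le> opt B U"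
  shows "exp (- 2 * \<epsilon>) * opt A A \<le> opt A U"
proof -
  have BA: "exp (- \<epsilon>) * opt A A \<le> opt B A"
    using exp_d_opt_mult_le_opt[OF d structs(2,1) pos] .
  have "0 < exp (- \<epsilon>) * opt A A" using pos by simp
  with BA through_U have "0 < opt B U" by linarith
  then have "exp (- \<epsilon>) * opt B U \<le> opt A U"
    using d structs by (intro exp_d_opt_mult_le_opt) (simp_all add: d_opt_commute)
  moreover have "exp (- \<epsilon>) * (exp (- \<epsilon>) * opt A A) \<le> exp (- \<epsilon>) * opt B U"
    using BA through_U by simp
  ultimately show ?thesis by (simp add: mult.assoc[symmetric] flip: exp_add)
qed

definition digraph_struct :: "nat set \<Rightarrow> (nat \<Rightarrow> nat \<Rightarrow> bool) \<Rightarrow> struct" where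
  "digraph_struct D T = (D, \<lambda>x y. of_bool (T x y))"

lemma dom_s_digraph_struct [simp]: "dom_s (digraph_struct D T) = D"
  and e_s_digraph_struct [simp]: "e_s (digraph_struct D T) x y = of_bool (T x y)"
  unfolding digraph_struct_def dom_s_def e_s_def by simp_all

lemma is_struct_digraph_struct: "finite D \<Longrightarrow> D \<noteq> {} \<Longrightarrow> is_struct (digraph_struct D T)"
  unfolding is_struct_def by simp

fun univ_size :: "nat \<Rightarrow> nat" where
  "univ_size 0 = 1"
| "univ_size (Suc k) = 2 ^ (univ_size k + 1)"

(* The binary digits of y record which smaller vertices send an arc to y; all other smaller
   vertices receive an arc from y.  So a fresh, large enough vertex can realise any pattern
   of arcs towards the earlier ones. *)
definition univ_arc :: "nat \<Rightarrow> nat \<Rightarrow> bool" where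
  "univ_arc x y \<longleftrightarrow> (x < y \<and> x \<in> set_decode y) \<or> (y < x \<and> y \<notin> set_decode x)"

lemma univ_arc_asym: "univ_arc x y \<Longrightarrow> \<not> univ_arc y x"
  unfolding univ_arc_def by auto

lemma univ_size_pos: "0 < univ_size k"
  by (cases k) simp_all

lemma set_encode_less_power:
  assumes "X \<subseteq> {..<n}"
  shows "set_encode X < 2 ^ n"
proof -
  have "set_encode X \<le> set_encode {..<n}"
    unfolding set_encode_def using assms by (intro sum_mono2) auto
  also have "set_encode {..<n} < 2 ^ n"
    by (induction n) (auto simp: set_encode_def lessThan_Suc)
  finally show ?thesis .
qed

lemma univ_arc_fresh_vertex:
  assumes Y: "Y \<subseteq> {..<t}" and x: "x < t"
  shows "univ_arc x (2 ^ t + set_encode Y) \<longleftrightarrow> x \<in> Y"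
    and "univ_arc (2 ^ t + set_encode Y) x \<longleftrightarrow> x \<notin> Y"
proof -
  have "finite Y" using Y finite_subset by blast
  moreover have "t \<notin> Y" using Y by auto
  ultimately have "2 ^ t + set_encode Y = set_encode (insert t Y)" by simp
  moreover have "set_decode (set_encode (insert t Y)) = insert t Y"
    using \<open>finite Y\<close> by simp
  moreover have "x < 2 ^ t + set_encode Y" using x less_exp[of t] by linarith
  ultimately show "univ_arc x (2 ^ t + set_encode Y) \<longleftrightarrow> x \<in> Y"
    and "univ_arc (2 ^ t + set_encode Y) x \<longleftrightarrow> x \<notin> Y"
    using x unfolding univ_arc_def by auto
qed

lemma asym_relation_embeds_univ:
  assumes "finite S" "card S \<le> k" "\<forall>x\<in>S. \<forall>y\<in>S. R x y \<longrightarrow> \<not> R y x"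
  shows "\<exists>g. inj_on g S \<and> g ` S \<subseteq> {..<univ_size k} \<and>
           (\<forall>x\<in>S. \<forall>y\<in>S. R x y \<longrightarrow> univ_arc (g x) (g y))"
  using assms
proof (induction k arbitrary: S)
  case 0
  then show ?case by simp
next
  case (Suc k)
  show ?case
  proof (cases "S = {}")
    case True
    then show ?thesis by simp
  next
    case False
    then obtain s where s: "s \<in> S" by blast
    define S' where "S' = S - {s}"
    have "finite S'" "card S' \<le> k" "\<forall>x\<in>S'. \<forall>y\<in>S'. R x y \<longrightarrow> \<not> R y x"
      using Suc.prems s unfolding S'_def by auto
    from Suc.IH[OF this] obtain g' where g'_inj: "inj_on g' S'"
      and g'_range: "g' ` S' \<subseteq> {..<univ_size k}"
      and g'_arcs: "\<forall>x\<in>S'. \<forall>y\<in>S'. R x y \<longrightarrow> univ_arc (g' x) (g' y)" by blast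
    define t where "t = univ_size k"
    define Y where "Y = g' ` {x\<in>S'. R x s}"
    define v where "v = 2 ^ t + set_encode Y"
    define g where "g = g'(s := v)"
    have Y: "Y \<subseteq> {..<t}" using g'_range unfolding Y_def t_def by auto
    have g'_less: "g' x < t" if "x \<in> S'" for x using g'_range that unfolding t_def by auto
    have "t < v" using less_exp[of t] unfolding v_def by linarith
    have "v < univ_size (Suc k)" using set_encode_less_power[OF Y] unfolding v_def t_def by simp
    have S: "S = insert s S'" "s \<notin> S'" using s unfolding S'_def by auto
    have g_S': "g x = g' x" if "x \<in> S'" for x using that S(2) unfolding g_def by auto
    have in_Y: "g' x \<in> Y \<longleftrightarrow> R x s" if "x \<in> S'" for x
      using that g'_inj unfolding Y_def inj_on_def by auto
    have "inj_on g S"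
      using g'_inj g_S' g'_less \<open>t < v\<close> S unfolding g_def
      by (auto simp: inj_on_def) (metis less_asym)+
    moreover have "g ` S \<subseteq> {..<univ_size (Suc k)}"
    proof -
      have "t < univ_size (Suc k)" using \<open>t < v\<close> \<open>v < univ_size (Suc k)\<close> by linarith
      then show ?thesis
        using S g'_less \<open>v < univ_size (Suc k)\<close> unfolding g_def by (auto intro: less_trans)
    qed
    moreover have "univ_arc (g x) (g y)" if xy: "x \<in> S" "y \<in> S" "R x y" for x y
    proof -
      consider "x = s" "y \<in> S'" | "x \<in> S'" "y = s" | "x \<in> S'" "y \<in> S'"
        using xy Suc.prems(3) S by blast
      then show ?thesis
      proof cases
        case 1
        then show ?thesis using xy Suc.prems(3) in_Y univ_arc_fresh_vertex(2)[OF Y g'_less]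
          g_S' unfolding g_def v_def by auto
      next
        case 2
        then show ?thesis using xy in_Y univ_arc_fresh_vertex(1)[OF Y g'_less]
          g_S' unfolding g_def v_def by auto
      next
        case 3
        then show ?thesis using xy g'_arcs g_S' by auto
      qed
    qed
    ultimately show ?thesis by blast
  qed
qed

lemma opt_digraph_le_opt_univ:
  assumes B: "is_struct B" "card (dom_s B) \<le> k"
    and D: "finite D" "D \<noteq> {}" and asym: "\<forall>x\<in>D. \<forall>y\<in>D. T x y \<longrightarrow> \<not> T y x"
  shows "opt B (digraph_struct D T) \<le> opt B (digraph_struct {..<univ_size k} univ_arc)"
proof -
  have fin_B: "finite (dom_s B)" and nonneg_B: "\<forall>x\<in>dom_s B. \<forall>y\<in>dom_s B. 0 \<le> e_s B x y"
    using B(1) unfolding is_struct_def by auto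
  obtain f where f: "f \<in> dom_s B \<rightarrow>\<^sub>E D"
    "opt B (digraph_struct D T) = hom_value B (digraph_struct D T) f"
    using opt_attained[of B "digraph_struct D T"] fin_B D by auto
  have "f ` dom_s B \<subseteq> D" using f(1) by auto
  moreover have "card (f ` dom_s B) \<le> k" using B(2) card_image_le[OF fin_B, of f] by simp
  ultimately obtain g where g: "g ` f ` dom_s B \<subseteq> {..<univ_size k}"
    "\<forall>x\<in>f ` dom_s B. \<forall>y\<in>f ` dom_s B. T x y \<longrightarrow> univ_arc (g x) (g y)"
    using asym_relation_embeds_univ[of "f ` dom_s B" k T] fin_B asym
    by (meson finite_imageI subsetD)
  let ?h = "\<lambda>i\<in>dom_s B. g (f i)"
  have "opt B (digraph_struct D T) \<le> hom_value B (digraph_struct {..<univ_size k} univ_arc) ?h"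
    unfolding f(2) using nonneg_B g(2) by (intro hom_value_mono) auto
  also have "\<dots> \<le> opt B (digraph_struct {..<univ_size k} univ_arc)"
    using fin_B g(1) by (intro hom_value_le_opt) auto
  finally show ?thesis .
qed

definition oriented_arc :: "nat set set \<Rightarrow> (nat set \<Rightarrow> bool) \<Rightarrow> nat \<Rightarrow> nat \<Rightarrow> bool" where
  "oriented_arc E \<sigma> x y \<longleftrightarrow> {x, y} \<in> E \<and> \<sigma> {x, y} = (x < y)"

lemma card_2_eq_Min_Max:
  assumes "card e = 2"
  shows "e = {Min e, Max e}" "Min e < Max e"
proof -
  obtain a b where "e = {a, b}" "a \<noteq> b" using assms card_2_iff by metis
  then show "e = {Min e, Max e}" "Min e < Max e"
    by (auto simp: min_def max_def)
qed

lemma oriented_arc_asym: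
  assumes "\<forall>e\<in>E. card e = 2" "oriented_arc E \<sigma> x y"
  shows "\<not> oriented_arc E \<sigma> y x"
proof -
  have "x \<noteq> y" using assms by (fastforce simp: oriented_arc_def)
  then show ?thesis using assms(2) by (auto simp: oriented_arc_def insert_commute)
qed

lemma is_orientation_oriented_arc:
  assumes "is_graph G"
  shows "is_orientation (digraph_struct (fst G) (oriented_arc (snd G) \<sigma>)) G"
proof -
  have "x \<noteq> y" if "{x, y} \<in> snd G" for x y
    using assms that unfolding is_graph_def by fastforce
  then show ?thesis
    unfolding is_orientation_def oriented_arc_def by (auto simp: insert_commute linorder_neq_iff)
qed

lemma is_struct_orientation:
  assumes "is_graph G" "snd G \<noteq> {}"
  shows "is_struct (digraph_struct (fst G) (oriented_arc (snd G) \<sigma>))"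
proof (rule is_struct_digraph_struct)
  obtain e where "e \<in> snd G" using assms(2) by blast
  with assms(1) have "e \<subseteq> fst G" "card e = 2" unfolding is_graph_def by auto
  then show "fst G \<noteq> {}" by auto
  show "finite (fst G)" using assms(1) unfolding is_graph_def by simp
qed

lemma sum_oriented_arcs:
  fixes F :: "nat \<Rightarrow> nat \<Rightarrow> 'a::comm_semiring_1"
  assumes V: "finite V" and E: "\<forall>e\<in>E. e \<subseteq> V \<and> card e = 2"
  shows "(\<Sum>(x,y)\<in>V \<times> V. of_bool (oriented_arc E \<sigma> x y) * F x y) =
         (\<Sum>e\<in>E. if \<sigma> e then F (Min e) (Max e) else F (Max e) (Min e))"
proof -
  have "finite E" using E V by (meson Pow_iff finite_Pow_iff rev_finite_subset subsetI)
  let ?f = "\<lambda>(x,y). of_bool (oriented_arc E \<sigma> x y) * F x y"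
  let ?P = "{p\<in>V \<times> V. {fst p, snd p} \<in> E}"
  have "(\<Sum>p\<in>V \<times> V. ?f p) = (\<Sum>p\<in>?P. ?f p)"
    by (rule sum.mono_neutral_right)
      (use V in \<open>auto simp: oriented_arc_def of_bool_def split: if_splits\<close>)
  also have "\<dots> = (\<Sum>e\<in>E. \<Sum>p\<in>{p\<in>?P. {fst p, snd p} = e}. ?f p)"
    by (rule sum.group[symmetric]) (use V \<open>finite E\<close> in auto)
  also have "\<dots> = (\<Sum>e\<in>E. if \<sigma> e then F (Min e) (Max e) else F (Max e) (Min e))"
  proof (rule sum.cong[OF refl])
    fix e assume e: "e \<in> E"
    then have e_eq: "e = {Min e, Max e}" and less: "Min e < Max e"
      using E card_2_eq_Min_Max by blast+
    have swap: "{Max e, Min e} = e" using e_eq by auto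
    have "{p\<in>?P. {fst p, snd p} = e} = {(Min e, Max e), (Max e, Min e)}"
      using e E e_eq swap by (auto simp: doubleton_eq_iff)
    then show "(\<Sum>p\<in>{p\<in>?P. {fst p, snd p} = e}. ?f p) =
        (if \<sigma> e then F (Min e) (Max e) else F (Max e) (Min e))"
      using less e e_eq[symmetric] swap by (auto simp: oriented_arc_def)
  qed
  finally show ?thesis .
qed

lemma hom_value_orientation:
  assumes "finite V" "\<forall>e\<in>E. e \<subseteq> V \<and> card e = 2"
  shows "hom_value (digraph_struct V (oriented_arc E \<sigma>)) C h = real_of_rat
           (\<Sum>e\<in>E. if \<sigma> e then e_s C (h (Min e)) (h (Max e)) else e_s C (h (Max e)) (h (Min e)))"
  unfolding hom_value_def by (simp add: sum_oriented_arcs[OF assms])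

lemma card_edges_le_opt_orientation:
  fixes \<sigma> :: "nat set \<Rightarrow> bool"
  assumes "is_graph G"
  defines "A \<equiv> digraph_struct (fst G) (oriented_arc (snd G) \<sigma>)"
  shows "real (card (snd G)) \<le> opt A A"
proof -
  have V: "finite (fst G)" and E: "\<forall>e\<in>snd G. e \<subseteq> fst G \<and> card e = 2"
    using assms unfolding is_graph_def by auto
  have "oriented_arc (snd G) \<sigma> (Min e) (Max e) = \<sigma> e"
    and "oriented_arc (snd G) \<sigma> (Max e) (Min e) = (\<not> \<sigma> e)" if "e \<in> snd G" for e
    using that E card_2_eq_Min_Max[of e] by (auto simp: oriented_arc_def insert_commute)
  moreover have "Min e \<in> fst G" "Max e \<in> fst G" if "e \<in> snd G" for e
    using that E card_2_eq_Min_Max[of e] by auto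
  ultimately have "hom_value A A (\<lambda>x\<in>fst G. x) = real_of_rat (\<Sum>e\<in>snd G. 1)"
    unfolding A_def hom_value_orientation[OF V E]
    by (intro arg_cong[where f = real_of_rat] sum.cong) auto
  moreover have "hom_value A A (\<lambda>x\<in>fst G. x) \<le> opt A A"
    using V unfolding A_def by (intro hom_value_le_opt) auto
  ultimately show ?thesis by (simp add: of_rat_of_nat_eq)
qed

(* Markov's inequality for 2^X, where X is the weight of a uniformly random choice:
   the expectation of 2^X is at most (3/2)^|E|. *)
lemma card_heavy_choices:
  fixes s :: "'e \<Rightarrow> bool \<Rightarrow> nat"
  assumes E: "finite E" and s: "\<forall>e\<in>E. s e True + s e False \<le> 1"
  shows "card {\<sigma>\<in>E \<rightarrow>\<^sub>E UNIV. a \<le> (\<Sum>e\<in>E. s e (\<sigma> e))} * 2 ^ a \<le> 3 ^ card E"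
proof -
  let ?W = "\<lambda>\<sigma>. (2::nat) ^ (\<Sum>e\<in>E. s e (\<sigma> e))"
  have "card {\<sigma>\<in>E \<rightarrow>\<^sub>E UNIV. a \<le> (\<Sum>e\<in>E. s e (\<sigma> e))} * 2 ^ a
      = (\<Sum>\<sigma>\<in>{\<sigma>\<in>E \<rightarrow>\<^sub>E UNIV. a \<le> (\<Sum>e\<in>E. s e (\<sigma> e))}. 2 ^ a)" by simp
  also have "\<dots> \<le> (\<Sum>\<sigma>\<in>{\<sigma>\<in>E \<rightarrow>\<^sub>E UNIV. a \<le> (\<Sum>e\<in>E. s e (\<sigma> e))}. ?W \<sigma>)"
    by (intro sum_mono power_increasing) auto
  also have "\<dots> \<le> (\<Sum>\<sigma>\<in>E \<rightarrow>\<^sub>E UNIV. ?W \<sigma>)"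
    using E by (intro sum_mono2) (auto simp: finite_PiE)
  also have "\<dots> = (\<Sum>\<sigma>\<in>E \<rightarrow>\<^sub>E UNIV. \<Prod>e\<in>E. (2::nat) ^ s e (\<sigma> e))"
    by (simp add: power_sum)
  also have "\<dots> = (\<Prod>e\<in>E. \<Sum>b\<in>UNIV. (2::nat) ^ s e b)"
    using E by (simp add: prod_sum_PiE)
  also have "\<dots> = (\<Prod>e\<in>E. (2::nat) ^ s e True + 2 ^ s e False)"
    by (simp add: UNIV_bool add.commute)
  also have "\<dots> \<le> (\<Prod>e\<in>E. (3::nat))"
  proof (rule prod_mono)
    fix e assume "e \<in> E"
    with s have "s e True + s e False \<le> 1" by blast
    then show "0 \<le> (2::nat) ^ s e True + 2 ^ s e False \<and> (2::nat) ^ s e True + 2 ^ s e False \<le> 3"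
      by (cases "s e True"; cases "s e False") auto
  qed
  finally show ?thesis by simp
qed

lemma exists_choice_light_for_all:
  fixes s :: "'h \<Rightarrow> 'e \<Rightarrow> bool \<Rightarrow> nat"
  assumes E: "finite E" and H: "finite H" and s: "\<forall>h\<in>H. \<forall>e\<in>E. s h e True + s h e False \<le> 1"
    and count: "card H * 3 ^ card E < 2 ^ card E * 2 ^ a"
  shows "\<exists>\<sigma>\<in>E \<rightarrow>\<^sub>E UNIV. \<forall>h\<in>H. (\<Sum>e\<in>E. s h e (\<sigma> e)) < a"
proof (rule ccontr)
  let ?heavy = "\<lambda>h. {\<sigma>\<in>E \<rightarrow>\<^sub>E UNIV. a \<le> (\<Sum>e\<in>E. s h e (\<sigma> e))}"
  assume "\<not> ?thesis"
  then have "E \<rightarrow>\<^sub>E UNIV \<subseteq> (\<Union>h\<in>H. ?heavy h)" by (auto simp: not_less)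
  then have "card (E \<rightarrow>\<^sub>E (UNIV :: bool set)) \<le> card (\<Union>h\<in>H. ?heavy h)"
    using E H by (intro card_mono) (auto simp: finite_PiE)
  also have "\<dots> \<le> (\<Sum>h\<in>H. card (?heavy h))"
    using H by (rule card_UN_le)
  finally have "2 ^ card E * 2 ^ a \<le> (\<Sum>h\<in>H. card (?heavy h) * 2 ^ a)"
    using E by (simp add: card_PiE flip: sum_distrib_right)
  also have "\<dots> \<le> (\<Sum>h\<in>H. 3 ^ card E)"
    using E s by (intro sum_mono card_heavy_choices) auto
  finally show False using count by simp
qed

(* Compare 8th powers: N^(8n) < 2^(8nN) <= 2^m, and 2 * 3^8 <= 2^14 <= 2^(8 + 8a/m). *)
lemma union_bound_arith:
  fixes N n m a :: nat
  assumes "1 \<le> N" "1 \<le> n" "8 * n * N \<le> m" "3 * m \<le> 4 * a"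
  shows "N ^ n * 3 ^ m < 2 ^ m * 2 ^ a"
proof -
  have "N ^ (8 * n) < (2 ^ N) ^ (8 * n)"
    using assms by (intro power_strict_mono) auto
  also have "\<dots> = 2 ^ (8 * n * N)" by (simp add: power_mult[symmetric] mult.commute)
  also have "\<dots> \<le> 2 ^ m" using assms by (intro power_increasing) auto
  finally have N: "N ^ (8 * n) < 2 ^ m" .
  have "(N ^ n * 3 ^ m) ^ 8 = N ^ (8 * n) * (3 ^ 8) ^ m"
    by (simp only: power_mult_distrib power_mult[symmetric] mult.commute)
  also have "\<dots> < 2 ^ m * (3 ^ 8) ^ m" using N by simp
  also have "\<dots> \<le> (2 ^ 14) ^ m"
    by (simp only: power_mult_distrib[symmetric]) (intro power_mono; simp)
  also have "\<dots> \<le> 2 ^ (8 * m + 8 * a)"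
    using assms by (simp only: power_mult[symmetric]) (intro power_increasing; simp)
  also have "\<dots> = (2 ^ m * 2 ^ a) ^ 8"
    by (simp only: power_add power_mult_distrib power_mult[symmetric] mult.commute)
  finally show ?thesis by (rule power_less_imp_less_base) simp
qed

definition arc_hit :: "(nat \<Rightarrow> nat \<Rightarrow> bool) \<Rightarrow> (nat \<Rightarrow> nat) \<Rightarrow> nat set \<Rightarrow> bool \<Rightarrow> nat" where
  "arc_hit T h e b = of_bool (if b then T (h (Min e)) (h (Max e)) else T (h (Max e)) (h (Min e)))"

lemma hom_value_orientation_digraph:
  assumes "finite V" "\<forall>e\<in>E. e \<subseteq> V \<and> card e = 2"
  shows "hom_value (digraph_struct V (oriented_arc E \<sigma>)) (digraph_struct D T) h
           = real (\<Sum>e\<in>E. arc_hit T h e (\<sigma> e))"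
proof -
  have "(\<Sum>e\<in>E. if \<sigma> e then e_s (digraph_struct D T) (h (Min e)) (h (Max e))
                 else e_s (digraph_struct D T) (h (Max e)) (h (Min e)))
        = of_nat (\<Sum>e\<in>E. arc_hit T h e (\<sigma> e))"
    unfolding arc_hit_def by (simp add: if_distrib cong: if_cong)
  then show ?thesis unfolding hom_value_orientation[OF assms] by (simp only: of_rat_of_nat_eq)
qed

lemma arc_hit_le_one:
  assumes "\<forall>x\<in>D. \<forall>y\<in>D. T x y \<longrightarrow> \<not> T y x" "h (Min e) \<in> D" "h (Max e) \<in> D"
  shows "arc_hit T h e True + arc_hit T h e False \<le> 1"
  using assms unfolding arc_hit_def by auto

lemma card_edges_gt_of_avg_degree_gt:
  assumes "2 * real c < avg_degree G"
  shows "card (fst G) \<noteq> 0" "c * card (fst G) < card (snd G)"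
proof -
  show "card (fst G) \<noteq> 0"
  proof
    assume "card (fst G) = 0"
    then show False using assms unfolding avg_degree_def by simp
  qed
  with assms have "real (c * card (fst G)) < real (card (snd G))"
    unfolding avg_degree_def by (simp add: field_simps)
  then show "c * card (fst G) < card (snd G)" by (simp only: of_nat_less_iff)
qed

lemma exists_orientation_far_from_digraph:
  assumes G: "is_graph G" and D: "finite D" "D \<noteq> {}"
    and asym: "\<forall>x\<in>D. \<forall>y\<in>D. T x y \<longrightarrow> \<not> T y x"
    and deg: "16 * real (card D) < avg_degree G"
  shows "\<exists>\<sigma>. 4 * opt (digraph_struct (fst G) (oriented_arc (snd G) \<sigma>)) (digraph_struct D T)
               < 3 * real (card (snd G))"
proof -
  define V E where "V = fst G" and "E = snd G"
  define n m N where "n = card V" and "m = card E" and "N = card D"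
  define a where "a = m - m div 4"
  have V: "finite V" and E: "\<forall>e\<in>E. e \<subseteq> V \<and> card e = 2"
    using G unfolding is_graph_def V_def E_def by auto
  have "finite E" using E V by (meson Pow_iff finite_Pow_iff rev_finite_subset subsetI)
  have "2 * real (8 * N) < avg_degree G" using deg unfolding N_def by simp
  from card_edges_gt_of_avg_degree_gt[OF this] have "n \<noteq> 0" "8 * n * N \<le> m"
    unfolding n_def m_def V_def E_def by (simp_all add: mult_ac)
  moreover have "1 \<le> N" using D unfolding N_def by (simp add: Suc_le_eq card_gt_0_iff)
  moreover have "3 * m \<le> 4 * a" unfolding a_def by linarith
  ultimately have "N ^ n * 3 ^ m < 2 ^ m * 2 ^ a" by (intro union_bound_arith) auto
  then have "card (V \<rightarrow>\<^sub>E D) * 3 ^ card E < 2 ^ card E * 2 ^ a"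
    using V unfolding n_def m_def N_def by (simp add: card_PiE)
  moreover have "\<forall>h\<in>V \<rightarrow>\<^sub>E D. \<forall>e\<in>E. arc_hit T h e True + arc_hit T h e False \<le> 1"
    using E card_2_eq_Min_Max by (intro ballI arc_hit_le_one[OF asym]) fastforce+
  ultimately obtain \<sigma> where light: "\<forall>h\<in>V \<rightarrow>\<^sub>E D. (\<Sum>e\<in>E. arc_hit T h e (\<sigma> e)) < a"
    using exists_choice_light_for_all[of E "V \<rightarrow>\<^sub>E D" "arc_hit T" a] \<open>finite E\<close> V D
    by (auto simp: finite_PiE)
  let ?A = "digraph_struct V (oriented_arc E \<sigma>)"
  obtain h where h: "h \<in> V \<rightarrow>\<^sub>E D"
    "opt ?A (digraph_struct D T) = hom_value ?A (digraph_struct D T) h"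
    using opt_attained[of ?A "digraph_struct D T"] V D by auto
  have "4 * (\<Sum>e\<in>E. arc_hit T h e (\<sigma> e)) < 3 * m" using light h(1) unfolding a_def by fastforce
  then have "4 * opt ?A (digraph_struct D T) < 3 * real m"
    unfolding h(2) hom_value_orientation_digraph[OF V E] by linarith
  then show ?thesis unfolding V_def E_def m_def by blast
qed

theorem lemma43:
  assumes "\<forall>G\<in>\<G>. is_graph G"
    and "unbounded_avg_degree \<G>"
  shows "\<not> size_pliable (orientations \<G>)"
proof
  assume "size_pliable (orientations \<G>)"
  then obtain k where k: "\<forall>A\<in>orientations \<G>.
      \<exists>B. is_struct B \<and> card (dom_s B) \<le> k \<and> d_opt A B \<le> ereal (1/10)"
    unfolding size_pliable_def by force
  let ?U = "digraph_struct {..<univ_size k} univ_arc"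
  have U: "finite {..<univ_size k}" "{..<univ_size k} \<noteq> {}"
    using univ_size_pos[of k] by (auto simp: lessThan_empty_iff)
  obtain G where G: "G \<in> \<G>" "is_graph G" "16 * real (card {..<univ_size k}) < avg_degree G"
    using assms unfolding unbounded_avg_degree_def by blast
  then have "card (snd G) \<noteq> 0" using U unfolding avg_degree_def by auto
  then have "snd G \<noteq> {}" by auto
  obtain \<sigma> where far:
    "4 * opt (digraph_struct (fst G) (oriented_arc (snd G) \<sigma>)) ?U < 3 * real (card (snd G))"
    using exists_orientation_far_from_digraph[OF G(2) U _ G(3)] univ_arc_asym by blast
  define A where "A = digraph_struct (fst G) (oriented_arc (snd G) \<sigma>)"
  have "A \<in> orientations \<G>"
    unfolding A_def orientations_def using is_orientation_oriented_arc[OF G(2)] G(1) by blast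
  with k obtain B where B: "is_struct B" "card (dom_s B) \<le> k" "d_opt A B \<le> ereal (1/10)" by blast
  have A: "is_struct A" "real (card (snd G)) \<le> opt A A"
    unfolding A_def using is_struct_orientation card_edges_le_opt_orientation G(2) \<open>snd G \<noteq> {}\<close>
    by auto
  have "opt B A \<le> opt B ?U"
    using G(2) is_struct_orientation[OF G(2) \<open>snd G \<noteq> {}\<close>] oriented_arc_asym
    unfolding A_def is_graph_def is_struct_def by (intro opt_digraph_le_opt_univ[OF B(1,2)]) auto
  then have "exp (- 2 * (1/10)) * opt A A \<le> opt A ?U"
    using A B \<open>card (snd G) \<noteq> 0\<close> is_struct_digraph_struct[OF U]
    by (intro exp_d_opt_self_le_opt) (auto intro: less_le_trans[rotated])
  moreover have "4/5 * opt A A \<le> exp (- 2 * (1/10)) * opt A A"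
    using exp_ge_add_one_self[of "- 2 * (1/10) :: real"] opt_nonneg[OF A(1) A(1)]
    by (intro mult_right_mono) auto
  ultimately show False using far A(2) unfolding A_def by linarith
qed

end
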